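(* Let $k_0,k_1,k_{-1},k_2,e_T$ be positive real numbers and consider the system \[ \dot s = k_0-k_1(e_T-c)s+k_{-1}c,\qquad \dot c = k_1(e_T-c)s-(k_{-1}+k_2)c \] on $\{s\ge0,\ 0\le c\le e_T\}$. Define the set \[ W_1:=\left\{(s,c):\ s\ge 0,\ \max\left\{0,\ \frac{k_1e_Ts-k_0}{k_1s+k_{-1}}\right\}\le c\le \frac{k_1e_Ts}{k_1s+k_{-1}+k_2}\right\}. \] Then: (a) If the system has no stationary point with positive coordinates, i.e. $k_0>k_2e_T$, then $\frac{k_1e_Ts}{k_1s+k_{-1}+k_2}>\frac{k_1e_Ts-k_0}{k_1s+k_{-1}}$ for all $s\ge 0$, and $W_1$ extends to $s\to\infty$. If the system has the positive stationary point $(\widehat s,\widehat c)$, then the two curves $c=\frac{k_1e_Ts}{k_1s+k_{-1}+k_2}$ and $c=\frac{k_1e_Ts-k_0}{k_1s+k_{-1}}$ meet at this point, and $s\le\widehat s$, $c\le \widehat c$ for all points $(s,c)\in W_1$. (b) $W_1$ is positively invariant for the system, and $\dot s\ge 0$ on $W_1$.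
   Context: The curves $c=\frac{k_1e_Ts}{k_1s+k_{-1}+k_2}$ and $c=\frac{k_1e_Ts-k_0}{k_1s+k_{-1}}$ are the $c$-nullcline ($\dot c=0$) and the $s$-nullcline ($\dot s=0$), respectively. When $k_2e_T>k_0$ the system has the unique stationary point $(\widehat s,\widehat c)=\left(\frac{(k_{-1}+k_2)k_0}{k_1(k_2e_T-k_0)},\frac{k_0}{k_2}\right)$ with positive coordinates. *)

theory Defs
  imports "HOL-Analysis.Analysis"
begin

definition sdot :: "real \<Rightarrow> real \<Rightarrow> real \<Rightarrow> real \<Rightarrow> real \<Rightarrow> real \<Rightarrow> real \<Rightarrow> real" where
  "sdot k0 k1 km1 k2 eT s c = k0 - k1 * (eT - c) * s + km1 * c"

definition cdot :: "real \<Rightarrow> real \<Rightarrow> real \<Rightarrow> real \<Rightarrow> real \<Rightarrow> real \<Rightarrow> real \<Rightarrow> real" where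
  "cdot k0 k1 km1 k2 eT s c = k1 * (eT - c) * s - (km1 + k2) * c"

definition c_null :: "real \<Rightarrow> real \<Rightarrow> real \<Rightarrow> real \<Rightarrow> real \<Rightarrow> real" where
  "c_null k1 km1 k2 eT s = k1 * eT * s / (k1 * s + km1 + k2)"

definition s_null :: "real \<Rightarrow> real \<Rightarrow> real \<Rightarrow> real \<Rightarrow> real \<Rightarrow> real" where
  "s_null k0 k1 km1 eT s = (k1 * eT * s - k0) / (k1 * s + km1)"

definition W1 :: "real \<Rightarrow> real \<Rightarrow> real \<Rightarrow> real \<Rightarrow> real \<Rightarrow> (real \<times> real) set" where
  "W1 k0 k1 km1 k2 eT = {(s, c). s \<ge> 0 \<and> max 0 (s_null k0 k1 km1 eT s) \<le> c
                                 \<and> c \<le> c_null k1 km1 k2 eT s}"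

definition pos_invariant ::
  "(real \<Rightarrow> real \<Rightarrow> real) \<Rightarrow> (real \<Rightarrow> real \<Rightarrow> real) \<Rightarrow> (real \<times> real) set \<Rightarrow> bool" where
  "pos_invariant F G A \<longleftrightarrow>
     (\<forall>(s :: real \<Rightarrow> real) (c :: real \<Rightarrow> real) (T :: real). 0 \<le> T \<longrightarrow>
        (\<forall>t\<in>{0..T}. (s has_real_derivative F (s t) (c t)) (at t within {0..T}) \<and>
                     (c has_real_derivative G (s t) (c t)) (at t within {0..T})) \<longrightarrow>
        (s 0, c 0) \<in> A \<longrightarrow> (\<forall>t\<in>{0..T}. (s t, c t) \<in> A))"

end

theory Submission
  imports Defs
begin

text \<open>For s \<ge> 0, W1 is the set of points with c \<ge> 0 where both rates sdot and cdot are
  nonnegative. Along a solution, x = sdot and y = cdot satisfy the linear system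
  x' = -k1 (eT - c) x + (k1 s + km1) y,  y' = k1 (eT - c) x - (k1 s + km1 + k2) y,
  which is cooperative (nonnegative off-diagonal coefficients) as long as s > -km1/k1 and
  c \<le> eT. The nonnegative quadrant of a cooperative linear system is invariant: perturb x and y
  by \<epsilon> e^(L t) with L above the size of the coefficients; at the first time a perturbed
  component reaches zero its derivative would be positive. So x, y \<ge> 0, hence s and c are
  nondecreasing and stay nonnegative. Part (a) is algebra: c_null - s_null has the sign of
  k0 (km1 + k2) - k1 (k2 eT - k0) s.\<close>

lemma continuous_on_first_zero:
  fixes m :: "real \<Rightarrow> real"
  assumes "continuous_on {0..T} m" and "m 0 > 0" and "t \<in> {0..T}" and "m t \<le> 0"
  obtains t1 where "t1 \<in> {0..T}" "t1 > 0" "m t1 = 0" "\<forall>u\<in>{0..<t1}. m u > 0"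
proof -
  define B where "B = {u \<in> {0..T}. m u \<le> 0}"
  have "closed B"
    using continuous_on_closed_Collect_le[OF assms(1) continuous_on_const closed_atLeastAtMost]
    by (simp add: B_def)
  moreover have "B \<noteq> {}" and bdd: "bdd_below B"
    using assms(3,4) by (auto simp: B_def bdd_below_def)
  ultimately have t1B: "Inf B \<in> B"
    by (rule closed_contains_Inf[rotated -1])
  have below: "m u > 0" if "u \<in> {0..<Inf B}" for u
    using that t1B cInf_lower[OF _ bdd, of u] by (force simp: B_def)
  have "Inf B > 0"
    using t1B assms(2) by (auto simp: B_def order.order_iff_strict)
  moreover have "m (Inf B) = 0"
  proof -
    have "continuous_on {0..Inf B} m"
      using assms(1) t1B by (auto simp: B_def intro: continuous_on_subset)
    then obtain x where "0 \<le> x" "x \<le> Inf B" "m x = 0"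
      using IVT2'[of m "Inf B" 0 0] t1B assms(2) \<open>Inf B > 0\<close> by (auto simp: B_def)
    with below show ?thesis
      by (metis atLeastLessThan_iff less_irrefl order_le_less)
  qed
  ultimately show ?thesis
    using that t1B below by (auto simp: B_def)
qed

lemma has_real_derivative_nonpos_at_first_zero:
  fixes f :: "real \<Rightarrow> real"
  assumes "(f has_real_derivative D) (at t1 within {0..T})" and "0 < t1" "t1 \<le> T"
    and "f t1 = 0" and "\<forall>u\<in>{0..<t1}. f u > 0"
  shows "D \<le> 0"
proof (rule ccontr)
  assume "\<not> D \<le> 0"
  then obtain d where d: "d > 0" "\<forall>h>0. t1 - h \<in> {0..T} \<longrightarrow> h < d \<longrightarrow> f (t1 - h) < f t1"
    using has_real_derivative_pos_inc_left[OF assms(1)] by auto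
  define h where "h = min (d/2) (t1/2)"
  have "h > 0" "h < d" "t1 - h \<in> {0..T}" "t1 - h \<in> {0..<t1}"
    using d assms by (auto simp: h_def)
  with d assms show False
    by fastforce
qed

lemma has_real_derivative_nonneg_imp_increasing_Icc:
  fixes f :: "real \<Rightarrow> real"
  assumes "\<And>u. u \<in> {0..T} \<Longrightarrow> (f has_real_derivative f' u) (at u within {0..T})"
    and "\<And>u. 0 < u \<Longrightarrow> u < t \<Longrightarrow> f' u \<ge> 0" and "0 \<le> t" "t \<le> T"
  shows "f 0 \<le> f t"
proof (rule DERIV_nonneg_imp_increasing_open[OF \<open>0 \<le> t\<close>])
  fix u assume u: "0 < u" "u < t"
  then have "at u within {0..T} = at u"
    using assms by (intro at_within_Icc_at) auto
  then show "\<exists>y. (f has_real_derivative y) (at u) \<and> 0 \<le> y"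
    using u assms by (metis atLeastAtMost_iff less_imp_le order.strict_trans2)
next
  have "continuous_on {0..T} f"
    using assms(1) by (intro DERIV_continuous_on) auto
  then show "continuous_on {0..t} f"
    by (rule continuous_on_subset) (use assms in auto)
qed

lemma linear_rate_pos_at_touching:
  fixes a b x y E L :: real
  assumes "x = - E" "y \<ge> - E" "b \<ge> 0" "\<bar>a\<bar> + b < L" "E > 0"
  shows "a * x + b * y + L * E > 0"
proof -
  have "a * x \<ge> - (\<bar>a\<bar> * E)"
    using assms(1,5) by (simp add: abs_ge_minus_self mult_right_mono)
  moreover have "b * y \<ge> - (b * E)"
    using assms(2,3) mult_left_mono[of "- E" y b] by simp
  moreover have "(\<bar>a\<bar> + b) * E < L * E"
    using assms(4,5) by (simp add: mult_strict_right_mono)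
  ultimately show ?thesis
    by (simp add: algebra_simps)
qed

text \<open>The off-diagonal coefficients b, d need only be nonnegative while x and y have stayed
  above -\<delta>: in the application their sign is not known in advance.\<close>

lemma cooperative_linear_system_perturbed_pos:
  fixes x y a b d e :: "real \<Rightarrow> real" and T \<delta> \<epsilon> L t :: real
  assumes dx: "\<And>t. t \<in> {0..T} \<Longrightarrow>
      (x has_real_derivative a t * x t + b t * y t) (at t within {0..T})"
    and dy: "\<And>t. t \<in> {0..T} \<Longrightarrow>
      (y has_real_derivative e t * y t + d t * x t) (at t within {0..T})"
    and rate: "\<And>t. t \<in> {0..T} \<Longrightarrow> \<bar>a t\<bar> + \<bar>b t\<bar> < L \<and> \<bar>e t\<bar> + \<bar>d t\<bar> < L"
    and init: "x 0 \<ge> 0" "y 0 \<ge> 0"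
    and sign: "\<And>t. t \<in> {0..T} \<Longrightarrow> \<forall>u\<in>{0..t}. x u \<ge> - \<delta> \<and> y u \<ge> - \<delta> \<Longrightarrow>
      b t \<ge> 0 \<and> d t \<ge> 0"
    and \<epsilon>: "\<epsilon> > 0" "\<epsilon> * exp (L * T) \<le> \<delta>"
    and t: "t \<in> {0..T}"
  shows "x t + \<epsilon> * exp (L * t) > 0 \<and> y t + \<epsilon> * exp (L * t) > 0"
proof (rule ccontr)
  assume not_pos: "\<not> ?thesis"
  define m where "m u = min (x u + \<epsilon> * exp (L * u)) (y u + \<epsilon> * exp (L * u))" for u
  have "continuous_on {0..T} x" "continuous_on {0..T} y"
    using DERIV_continuous_on[OF dx] DERIV_continuous_on[OF dy] by auto
  then have "continuous_on {0..T} m"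
    unfolding m_def by (intro continuous_intros)
  moreover have "m 0 > 0" "m t \<le> 0"
    using init \<epsilon> not_pos by (auto simp: m_def)
  ultimately obtain t1 where t1: "t1 \<in> {0..T}" "t1 > 0" "m t1 = 0" "\<forall>u\<in>{0..<t1}. m u > 0"
    using continuous_on_first_zero t by metis
  define E where "E = \<epsilon> * exp (L * t1)"
  have "E > 0"
    using \<epsilon> by (simp add: E_def)
  have "L > 0"
    using rate[OF t] by linarith
  have hist: "\<forall>u\<in>{0..t1}. x u \<ge> - \<delta> \<and> y u \<ge> - \<delta>"
  proof
    fix u assume u: "u \<in> {0..t1}"
    then have "m u \<ge> 0"
      using t1 by (cases "u = t1") (auto simp: less_imp_le)
    moreover have "\<epsilon> * exp (L * u) \<le> \<delta>"
      using \<epsilon> \<open>L > 0\<close> u t1(1) by (smt (verit) atLeastAtMost_iff exp_mono mult_left_mono)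
    ultimately show "x u \<ge> - \<delta> \<and> y u \<ge> - \<delta>"
      by (auto simp: m_def)
  qed
  have "b t1 \<ge> 0" "d t1 \<ge> 0"
    using sign[OF t1(1) hist] by auto
  have "\<bar>a t1\<bar> + b t1 < L" "\<bar>e t1\<bar> + d t1 < L"
    using rate[OF t1(1)] \<open>b t1 \<ge> 0\<close> \<open>d t1 \<ge> 0\<close> by auto
  have "x t1 \<ge> - E" "y t1 \<ge> - E" "x t1 = - E \<or> y t1 = - E"
    using t1(3) by (auto simp: m_def E_def min_def split: if_splits)
  have dexp: "((\<lambda>u. \<epsilon> * exp (L * u)) has_real_derivative L * E) (at t1 within {0..T})"
    by (auto intro!: derivative_eq_intros simp: E_def)
  from \<open>x t1 = - E \<or> y t1 = - E\<close> show False
  proof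
    assume "x t1 = - E"
    have "a t1 * x t1 + b t1 * y t1 + L * E \<le> 0"
      by (rule has_real_derivative_nonpos_at_first_zero[OF DERIV_add[OF dx[OF t1(1)] dexp]])
        (use t1 \<open>x t1 = - E\<close> in \<open>auto simp: m_def E_def\<close>)
    then show False
      using linear_rate_pos_at_touching \<open>x t1 = - E\<close> \<open>y t1 \<ge> - E\<close> \<open>b t1 \<ge> 0\<close>
        \<open>\<bar>a t1\<bar> + b t1 < L\<close> \<open>E > 0\<close> by fastforce
  next
    assume "y t1 = - E"
    have "e t1 * y t1 + d t1 * x t1 + L * E \<le> 0"
      by (rule has_real_derivative_nonpos_at_first_zero[OF DERIV_add[OF dy[OF t1(1)] dexp]])
        (use t1 \<open>y t1 = - E\<close> in \<open>auto simp: m_def E_def\<close>)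
    then show False
      using linear_rate_pos_at_touching \<open>y t1 = - E\<close> \<open>x t1 \<ge> - E\<close> \<open>d t1 \<ge> 0\<close>
        \<open>\<bar>e t1\<bar> + d t1 < L\<close> \<open>E > 0\<close> by fastforce
  qed
qed

lemma cooperative_linear_system_nonneg:
  fixes x y a b d e :: "real \<Rightarrow> real" and T \<delta> t :: real
  assumes dx: "\<And>t. t \<in> {0..T} \<Longrightarrow>
      (x has_real_derivative a t * x t + b t * y t) (at t within {0..T})"
    and dy: "\<And>t. t \<in> {0..T} \<Longrightarrow>
      (y has_real_derivative e t * y t + d t * x t) (at t within {0..T})"
    and cont: "continuous_on {0..T} a" "continuous_on {0..T} b"
      "continuous_on {0..T} d" "continuous_on {0..T} e"
    and init: "x 0 \<ge> 0" "y 0 \<ge> 0"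
    and "\<delta> > 0"
    and sign: "\<And>t. t \<in> {0..T} \<Longrightarrow> \<forall>u\<in>{0..t}. x u \<ge> - \<delta> \<and> y u \<ge> - \<delta> \<Longrightarrow>
      b t \<ge> 0 \<and> d t \<ge> 0"
    and t: "t \<in> {0..T}"
  shows "x t \<ge> 0 \<and> y t \<ge> 0"
proof -
  have "bounded ((\<lambda>t. \<bar>a t\<bar> + \<bar>b t\<bar> + \<bar>d t\<bar> + \<bar>e t\<bar>) ` {0..T})"
    by (intro compact_imp_bounded compact_continuous_image continuous_intros cont) simp
  then obtain K where K: "\<forall>t\<in>{0..T}. \<bar>a t\<bar> + \<bar>b t\<bar> + \<bar>d t\<bar> + \<bar>e t\<bar> \<le> K"
    unfolding bounded_real by auto
  define L where "L = K + 1"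
  have rate: "\<bar>a t\<bar> + \<bar>b t\<bar> < L \<and> \<bar>e t\<bar> + \<bar>d t\<bar> < L" if "t \<in> {0..T}" for t
    using K that unfolding L_def by fastforce
  have limit: "z t \<ge> 0"
    if "\<And>\<epsilon>. \<epsilon> > 0 \<Longrightarrow> \<epsilon> * exp (L * T) \<le> \<delta> \<Longrightarrow> z t + \<epsilon> * exp (L * t) > 0"
    for z :: "real \<Rightarrow> real"
  proof (rule tendsto_lowerbound)
    show "((\<lambda>\<epsilon>. z t + \<epsilon> * exp (L * t)) \<longlongrightarrow> z t) (at_right 0)"
      by (auto intro!: tendsto_eq_intros)
    have "\<delta> / exp (L * T) > 0"
      using \<open>\<delta> > 0\<close> by simp
    then show "\<forall>\<^sub>F \<epsilon> in at_right 0. 0 \<le> z t + \<epsilon> * exp (L * t)"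
      unfolding eventually_at_right_field
      by (intro exI[of _ "\<delta> / exp (L * T)"]) (auto intro!: less_imp_le that simp: pos_less_divide_eq)
  qed simp
  show ?thesis
    using limit[of x] limit[of y]
      cooperative_linear_system_perturbed_pos[OF dx dy rate init sign _ _ t] by blast
qed

locale michaelis_menten =
  fixes k0 k1 km1 k2 eT :: real
  assumes k0_pos: "k0 > 0" and k1_pos: "k1 > 0" and km1_pos: "km1 > 0"
    and k2_pos: "k2 > 0" and eT_pos: "eT > 0"
begin

lemma denominators_pos:
  assumes "s \<ge> 0"
  shows "k1 * s + km1 > 0" "k1 * s + km1 + k2 > 0"
  using assms k1_pos km1_pos k2_pos by (simp_all add: add_nonneg_pos add_pos_pos)

lemma sdot_nonneg_iff:
  assumes "s \<ge> 0"
  shows "sdot k0 k1 km1 k2 eT s c \<ge> 0 \<longleftrightarrow> s_null k0 k1 km1 eT s \<le> c"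
  using denominators_pos[OF assms]
  by (simp add: s_null_def sdot_def divide_le_eq algebra_simps)

lemma cdot_nonneg_iff:
  assumes "s \<ge> 0"
  shows "cdot k0 k1 km1 k2 eT s c \<ge> 0 \<longleftrightarrow> c \<le> c_null k1 km1 k2 eT s"
  using denominators_pos[OF assms]
  by (simp add: c_null_def cdot_def le_divide_eq algebra_simps)

lemma W1_iff:
  "(s, c) \<in> W1 k0 k1 km1 k2 eT \<longleftrightarrow>
     s \<ge> 0 \<and> c \<ge> 0 \<and> sdot k0 k1 km1 k2 eT s c \<ge> 0 \<and> cdot k0 k1 km1 k2 eT s c \<ge> 0"
  using sdot_nonneg_iff cdot_nonneg_iff unfolding W1_def by auto

lemma c_null_minus_s_null:
  assumes "s \<ge> 0"
  shows "c_null k1 km1 k2 eT s - s_null k0 k1 km1 eT s =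
    (k0 * (km1 + k2) - k1 * (k2 * eT - k0) * s) / ((k1 * s + km1 + k2) * (k1 * s + km1))"
  using denominators_pos[OF assms]
  by (simp add: c_null_def s_null_def field_simps)

lemma s_null_le_c_null_iff:
  assumes "s \<ge> 0"
  shows "s_null k0 k1 km1 eT s \<le> c_null k1 km1 k2 eT s \<longleftrightarrow>
    k1 * (k2 * eT - k0) * s \<le> k0 * (km1 + k2)"
  using c_null_minus_s_null[OF assms] denominators_pos[OF assms]
  by (smt (verit) divide_nonneg_pos divide_neg_pos mult_pos_pos)

lemma s_null_less_c_null_iff:
  assumes "s \<ge> 0"
  shows "s_null k0 k1 km1 eT s < c_null k1 km1 k2 eT s \<longleftrightarrow>
    k1 * (k2 * eT - k0) * s < k0 * (km1 + k2)"
  using c_null_minus_s_null[OF assms] denominators_pos[OF assms]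
  by (smt (verit) divide_pos_pos divide_nonpos_pos mult_pos_pos)

lemma c_null_mono:
  assumes "0 \<le> s" "s \<le> s'"
  shows "c_null k1 km1 k2 eT s \<le> c_null k1 km1 k2 eT s'"
proof -
  have "k1 * eT * (km1 + k2) * s \<le> k1 * eT * (km1 + k2) * s'"
    using assms k1_pos km1_pos k2_pos eT_pos by (intro mult_left_mono) auto
  then show ?thesis
    using denominators_pos[OF assms(1)] denominators_pos[of s'] assms
    by (simp add: c_null_def divide_simps algebra_simps)
qed

lemma nullclines_separate_without_stationary_point:
  assumes "k0 > k2 * eT" "s \<ge> 0"
  shows "s_null k0 k1 km1 eT s < c_null k1 km1 k2 eT s"
proof -
  have "k1 * (k2 * eT - k0) * s \<le> 0"
    using assms k1_pos by (simp add: mult_nonneg_nonpos mult_nonpos_nonneg)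
  also have "0 < k0 * (km1 + k2)"
    using k0_pos km1_pos k2_pos by simp
  finally show ?thesis
    using s_null_less_c_null_iff[OF assms(2)] by simp
qed

lemma W1_unbounded:
  assumes "k0 > k2 * eT"
  shows "\<exists>s c. s \<ge> S \<and> (s, c) \<in> W1 k0 k1 km1 k2 eT"
proof -
  define s where "s = max S 0"
  have "s \<ge> 0" "s \<ge> S"
    by (auto simp: s_def)
  moreover have "c_null k1 km1 k2 eT s \<ge> 0"
    using \<open>s \<ge> 0\<close> denominators_pos[OF \<open>s \<ge> 0\<close>] k1_pos eT_pos by (simp add: c_null_def)
  ultimately have "(s, c_null k1 km1 k2 eT s) \<in> W1 k0 k1 km1 k2 eT"
    using nullclines_separate_without_stationary_point[OF assms \<open>s \<ge> 0\<close>]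
    unfolding W1_def by auto
  with \<open>s \<ge> S\<close> show ?thesis
    by blast
qed

context
  fixes sh ch :: real
  defines "sh \<equiv> (km1 + k2) * k0 / (k1 * (k2 * eT - k0))" and "ch \<equiv> k0 / k2"
  assumes stationary: "k2 * eT > k0"
begin

lemma k1_sh: "k1 * sh * (k2 * eT - k0) = (km1 + k2) * k0"
  using stationary k1_pos unfolding sh_def by simp

lemma sh_nonneg: "sh \<ge> 0"
  using stationary k0_pos k1_pos km1_pos k2_pos unfolding sh_def by simp

lemma c_null_stationary: "c_null k1 km1 k2 eT sh = ch"
  using denominators_pos[OF sh_nonneg] k1_sh k2_pos unfolding c_null_def ch_def
  by (simp add: field_simps)

lemma s_null_stationary: "s_null k0 k1 km1 eT sh = ch"
  using denominators_pos[OF sh_nonneg] k1_sh k2_pos unfolding s_null_def ch_def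
  by (simp add: field_simps)

lemma W1_below_stationary_point:
  assumes "(s, c) \<in> W1 k0 k1 km1 k2 eT"
  shows "s \<le> sh \<and> c \<le> ch"
proof -
  have "s \<ge> 0" "s_null k0 k1 km1 eT s \<le> c_null k1 km1 k2 eT s" "c \<le> c_null k1 km1 k2 eT s"
    using assms unfolding W1_def by auto
  then have "s * (k1 * (k2 * eT - k0)) \<le> (km1 + k2) * k0"
    using s_null_le_c_null_iff by (simp add: algebra_simps)
  then have "s \<le> sh"
    using stationary k1_pos unfolding sh_def by (simp add: le_divide_eq)
  then show ?thesis
    using c_null_mono[OF \<open>s \<ge> 0\<close>] c_null_stationary \<open>c \<le> c_null k1 km1 k2 eT s\<close> by force
qed

end

lemma has_real_derivative_sdot_cdot:
  assumes ds: "(s has_real_derivative sdot k0 k1 km1 k2 eT (s t) (c t)) (at t within S)"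
    and dc: "(c has_real_derivative cdot k0 k1 km1 k2 eT (s t) (c t)) (at t within S)"
  shows "((\<lambda>t. sdot k0 k1 km1 k2 eT (s t) (c t)) has_real_derivative
      - k1 * (eT - c t) * sdot k0 k1 km1 k2 eT (s t) (c t)
      + (k1 * s t + km1) * cdot k0 k1 km1 k2 eT (s t) (c t)) (at t within S)"
    and "((\<lambda>t. cdot k0 k1 km1 k2 eT (s t) (c t)) has_real_derivative
      - (k1 * s t + km1 + k2) * cdot k0 k1 km1 k2 eT (s t) (c t)
      + k1 * (eT - c t) * sdot k0 k1 km1 k2 eT (s t) (c t)) (at t within S)"
  using ds dc unfolding sdot_def cdot_def
  by (auto intro!: derivative_eq_intros simp: algebra_simps)

lemma solution_coefficients_nonneg:
  assumes ds: "\<And>t. t \<in> {0..T} \<Longrightarrow>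
      (s has_real_derivative sdot k0 k1 km1 k2 eT (s t) (c t)) (at t within {0..T})"
    and "s 0 \<ge> 0" and \<delta>: "\<delta> \<le> km1 / (k1 * (T + 1))" "\<delta> \<le> eT * (km1 + k2)"
    and t: "t \<in> {0..T}"
    and almost_nonneg: "\<forall>u\<in>{0..t}. sdot k0 k1 km1 k2 eT (s u) (c u) \<ge> - \<delta>
      \<and> cdot k0 k1 km1 k2 eT (s u) (c u) \<ge> - \<delta>"
  shows "k1 * s t + km1 \<ge> 0 \<and> k1 * (eT - c t) \<ge> 0"
proof -
  have "(\<lambda>u. s u + \<delta> * u) 0 \<le> (\<lambda>u. s u + \<delta> * u) t"
  proof (rule has_real_derivative_nonneg_imp_increasing_Icc[where T = T])
    show "((\<lambda>u. s u + \<delta> * u) has_real_derivative sdot k0 k1 km1 k2 eT (s u) (c u) + \<delta>)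
      (at u within {0..T})" if "u \<in> {0..T}" for u
      using ds[OF that] by (auto intro!: derivative_eq_intros)
    show "sdot k0 k1 km1 k2 eT (s u) (c u) + \<delta> \<ge> 0" if "0 < u" "u < t" for u
      using almost_nonneg[rule_format, of u] that by auto
  qed (use t in auto)
  moreover have "k1 * (\<delta> * t) < km1"
  proof -
    have "k1 * (\<delta> * t) \<le> k1 * (km1 / (k1 * (T + 1)) * T)"
      using t \<delta> k1_pos km1_pos by (intro mult_left_mono mult_mono) auto
    also have "\<dots> = km1 * T / (T + 1)"
      using k1_pos by simp
    also have "\<dots> < km1"
      using t km1_pos by (simp add: divide_less_eq)
    finally show ?thesis .
  qed
  ultimately have "k1 * s t + km1 > 0"
    using \<open>s 0 \<ge> 0\<close> k1_pos mult_left_mono[of "- (\<delta> * t)" "s t" k1] by simp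
  moreover have "(eT - c t) * (k1 * s t + km1 + k2) \<ge> 0"
  proof -
    have "(eT - c t) * (k1 * s t + km1 + k2) = cdot k0 k1 km1 k2 eT (s t) (c t) + eT * (km1 + k2)"
      by (simp add: cdot_def algebra_simps)
    moreover have "cdot k0 k1 km1 k2 eT (s t) (c t) \<ge> - \<delta>"
      using almost_nonneg t by auto
    ultimately show ?thesis
      using \<delta> by linarith
  qed
  ultimately show ?thesis
    using k1_pos k2_pos by (simp add: zero_le_mult_iff)
qed

lemma solution_sdot_cdot_nonneg:
  assumes ds: "\<And>t. t \<in> {0..T} \<Longrightarrow>
      (s has_real_derivative sdot k0 k1 km1 k2 eT (s t) (c t)) (at t within {0..T})"
    and dc: "\<And>t. t \<in> {0..T} \<Longrightarrow>
      (c has_real_derivative cdot k0 k1 km1 k2 eT (s t) (c t)) (at t within {0..T})"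
    and init: "(s 0, c 0) \<in> W1 k0 k1 km1 k2 eT"
    and t: "t \<in> {0..T}"
  shows "sdot k0 k1 km1 k2 eT (s t) (c t) \<ge> 0 \<and> cdot k0 k1 km1 k2 eT (s t) (c t) \<ge> 0"
proof -
  define \<delta> where "\<delta> = min (km1 / (k1 * (T + 1))) (eT * (km1 + k2))"
  have "\<delta> > 0"
    using t k1_pos km1_pos k2_pos eT_pos by (simp add: \<delta>_def)
  have "s 0 \<ge> 0"
    using init unfolding W1_def by auto
  note sign = solution_coefficients_nonneg[OF ds \<open>s 0 \<ge> 0\<close>, of \<delta>]
  have "continuous_on {0..T} s" "continuous_on {0..T} c"
    using DERIV_continuous_on[OF ds] DERIV_continuous_on[OF dc] by auto
  then show ?thesis
    using init unfolding W1_iff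
    by (intro cooperative_linear_system_nonneg[where a = "\<lambda>t. - k1 * (eT - c t)"
          and b = "\<lambda>t. k1 * s t + km1" and e = "\<lambda>t. - (k1 * s t + km1 + k2)"
          and d = "\<lambda>t. k1 * (eT - c t)", OF has_real_derivative_sdot_cdot(1)[OF ds dc]
          has_real_derivative_sdot_cdot(2)[OF ds dc] _ _ _ _ _ _ \<open>\<delta> > 0\<close> sign t])
      (auto intro!: continuous_intros simp: \<delta>_def)
qed

lemma pos_invariant_W1:
  "pos_invariant (sdot k0 k1 km1 k2 eT) (cdot k0 k1 km1 k2 eT) (W1 k0 k1 km1 k2 eT)"
  unfolding pos_invariant_def
proof (intro allI impI ballI)
  fix s c :: "real \<Rightarrow> real" and T t :: real
  assume "\<forall>t\<in>{0..T}. (s has_real_derivative sdot k0 k1 km1 k2 eT (s t) (c t)) (at t within {0..T})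
      \<and> (c has_real_derivative cdot k0 k1 km1 k2 eT (s t) (c t)) (at t within {0..T})"
    and init: "(s 0, c 0) \<in> W1 k0 k1 km1 k2 eT" and t: "t \<in> {0..T}"
  then have ds: "\<And>t. t \<in> {0..T} \<Longrightarrow>
      (s has_real_derivative sdot k0 k1 km1 k2 eT (s t) (c t)) (at t within {0..T})"
    and dc: "\<And>t. t \<in> {0..T} \<Longrightarrow>
      (c has_real_derivative cdot k0 k1 km1 k2 eT (s t) (c t)) (at t within {0..T})"
    by auto
  have rates_nonneg: "sdot k0 k1 km1 k2 eT (s u) (c u) \<ge> 0 \<and> cdot k0 k1 km1 k2 eT (s u) (c u) \<ge> 0"
    if "u \<in> {0..T}" for u
    using solution_sdot_cdot_nonneg[where s = s and c = c and T = T, OF ds dc init that] .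
  have "s 0 \<le> s t"
    by (rule has_real_derivative_nonneg_imp_increasing_Icc[OF ds]) (use rates_nonneg t in auto)
  moreover have "c 0 \<le> c t"
    by (rule has_real_derivative_nonneg_imp_increasing_Icc[OF dc]) (use rates_nonneg t in auto)
  ultimately show "(s t, c t) \<in> W1 k0 k1 km1 k2 eT"
    using init rates_nonneg[OF t] unfolding W1_iff by auto
qed

end

theorem lemma4p3:
  fixes k0 k1 km1 k2 eT :: real
  assumes "k0 > 0" "k1 > 0" "km1 > 0" "k2 > 0" "eT > 0"
  shows
    "(k0 > k2 * eT \<longrightarrow>
        (\<forall>s\<ge>0. c_null k1 km1 k2 eT s > s_null k0 k1 km1 eT s) \<and>
        (\<forall>S. \<exists>s c. s \<ge> S \<and> (s, c) \<in> W1 k0 k1 km1 k2 eT))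
     \<and> (k2 * eT > k0 \<longrightarrow>
        (let sh = (km1 + k2) * k0 / (k1 * (k2 * eT - k0)); ch = k0 / k2 in
           c_null k1 km1 k2 eT sh = ch \<and> s_null k0 k1 km1 eT sh = ch \<and>
           (\<forall>(s, c) \<in> W1 k0 k1 km1 k2 eT. s \<le> sh \<and> c \<le> ch)))
     \<and> pos_invariant (sdot k0 k1 km1 k2 eT) (cdot k0 k1 km1 k2 eT) (W1 k0 k1 km1 k2 eT)
     \<and> (\<forall>(s, c) \<in> W1 k0 k1 km1 k2 eT. sdot k0 k1 km1 k2 eT s c \<ge> 0)"
proof -
  interpret michaelis_menten k0 k1 km1 k2 eT
    using assms by unfold_locales
  have "k0 > k2 * eT \<longrightarrow>
      (\<forall>s\<ge>0. c_null k1 km1 k2 eT s > s_null k0 k1 km1 eT s) \<and>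
      (\<forall>S. \<exists>s c. s \<ge> S \<and> (s, c) \<in> W1 k0 k1 km1 k2 eT)"
    using nullclines_separate_without_stationary_point W1_unbounded by blast
  moreover have "k2 * eT > k0 \<longrightarrow>
      (let sh = (km1 + k2) * k0 / (k1 * (k2 * eT - k0)); ch = k0 / k2 in
         c_null k1 km1 k2 eT sh = ch \<and> s_null k0 k1 km1 eT sh = ch \<and>
         (\<forall>(s, c) \<in> W1 k0 k1 km1 k2 eT. s \<le> sh \<and> c \<le> ch))"
    using c_null_stationary s_null_stationary W1_below_stationary_point by (auto simp: Let_def)
  moreover have "\<forall>(s, c) \<in> W1 k0 k1 km1 k2 eT. sdot k0 k1 km1 k2 eT s c \<ge> 0"
    using W1_iff by auto
  ultimately show ?thesis
    using pos_invariant_W1 by blast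
qed

end
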